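(* Let $X$ be a finite set with $|X|=n$, $0\notin X$, $W=X\cup\{0\}$. Let $\mathfrak{V}$ be a $\big(\binom{n}{2}_{\,n-2}\ \binom{n}{3}_{\,3}\big)$-configuration whose point set is $\mathcal{P}_2(X)$, and let $\mathfrak{M}$ be the structure with point set $\mathcal{P}_2(W)$ whose lines are the lines of $\mathfrak{V}$ together with all sets $\{\{0,x\},\{0,y\},\{x,y\}\}$ for distinct $x,y\in X$. Let $H$ be a hyperplane of $\mathfrak{M}$, and on $X$ define the equivalence relation $x\sim y$ iff $x=y$, or $x\neq y$ and $\{x,y\}\in H$. If $\mathfrak{a}\neq\mathfrak{b}$ are equivalence classes of $\sim$, then $\{0,x\}\in H$ for all $x\in\mathfrak{a}$, or $\{0,x\}\in H$ for all $x\in\mathfrak{b}$.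
   Context: $\mathcal{P}_2(Y)$ denotes the set of $2$-element subsets of $Y$. A $(v_r\ b_k)$-configuration is a partial linear space with $v$ points and $b$ lines, each point on exactly $r$ lines and each line containing exactly $k$ points. A subspace is a set of points containing every line that meets it in at least two points; a hyperplane is a proper subspace meeting every line. *)

theory Defs
  imports Main
begin

definition P2 :: "'a set \<Rightarrow> 'a set set" where
  "P2 Y = {e. e \<subseteq> Y \<and> card e = 2}"

definition partial_linear_space :: "'p set \<Rightarrow> 'p set set \<Rightarrow> bool" where
  "partial_linear_space P L \<longleftrightarrow>
     (\<forall>l\<in>L. l \<subseteq> P \<and> 2 \<le> card l) \<and>
     (\<forall>p\<in>P. \<forall>q\<in>P. p \<noteq> q \<longrightarrow>
        (\<forall>l\<in>L. \<forall>m\<in>L. p \<in> l \<and> q \<in> l \<and> p \<in> m \<and> q \<in> m \<longrightarrow> l = m))"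

definition configuration :: "nat \<Rightarrow> nat \<Rightarrow> nat \<Rightarrow> nat \<Rightarrow> 'p set \<Rightarrow> 'p set set \<Rightarrow> bool" where
  "configuration v r b k P L \<longleftrightarrow>
     partial_linear_space P L \<and> finite P \<and> finite L \<and>
     card P = v \<and> card L = b \<and>
     (\<forall>p\<in>P. card {l\<in>L. p \<in> l} = r) \<and>
     (\<forall>l\<in>L. card l = k)"

definition subspace :: "'p set \<Rightarrow> 'p set set \<Rightarrow> 'p set \<Rightarrow> bool" where
  "subspace P L S \<longleftrightarrow> S \<subseteq> P \<and> (\<forall>l\<in>L. 2 \<le> card (l \<inter> S) \<longrightarrow> l \<subseteq> S)"

definition hyperplane :: "'p set \<Rightarrow> 'p set set \<Rightarrow> 'p set \<Rightarrow> bool" where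
  "hyperplane P L H \<longleftrightarrow> subspace P L H \<and> H \<noteq> P \<and> (\<forall>l\<in>L. l \<inter> H \<noteq> {})"

text \<open>Lines of the extended structure M on P2(X \<union> {z}), z playing the role of 0.\<close>
definition ext_lines :: "'a \<Rightarrow> 'a set \<Rightarrow> 'a set set set \<Rightarrow> 'a set set set" where
  "ext_lines z X L = L \<union> {{{z,x},{z,y},{x,y}} | x y. x \<in> X \<and> y \<in> X \<and> x \<noteq> y}"

end

theory Submission
  imports Defs
begin

text \<open>A hyperplane meets each line {{0,x},{0,y},{x,y}} in one point or in all three, so
  {x,y} \<in> H exactly when {0,x} and {0,y} lie on the same side of H. Hence the classes
  of \<sim> are the fibres of x \<mapsto> ({0,x} \<in> H); two distinct fibres of a boolean-valued map
  take distinct values, and the class with value True lies in H.\<close>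

lemma hyperplane_contains_line:
  assumes "hyperplane P L H" and "l \<in> L" and "finite l"
    and "p \<in> l" "q \<in> l" "p \<noteq> q" "p \<in> H" "q \<in> H"
  shows "l \<subseteq> H"
proof -
  have "card {p, q} \<le> card (l \<inter> H)"
    using assms(3-8) by (intro card_mono) auto
  with \<open>p \<noteq> q\<close> have "2 \<le> card (l \<inter> H)" by simp
  with assms(1,2) show ?thesis unfolding hyperplane_def subspace_def by blast
qed

lemma hyperplane_edge_iff:
  assumes hp: "hyperplane (P2 (X \<union> {z})) (ext_lines z X L) H"
    and "z \<notin> X" and "x \<in> X" and "y \<in> X" and "x \<noteq> y"
  shows "{x, y} \<in> H \<longleftrightarrow> ({z, x} \<in> H \<longleftrightarrow> {z, y} \<in> H)"
proof -
  let ?l = "{{z, x}, {z, y}, {x, y}}"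
  have l: "?l \<in> ext_lines z X L" unfolding ext_lines_def using assms(3-5) by blast
  have distinct: "{z, x} \<noteq> {z, y}" "{z, x} \<noteq> {x, y}" "{z, y} \<noteq> {x, y}"
    using assms(2-5) by (auto simp: doubleton_eq_iff)
  have closed: "p \<in> H \<Longrightarrow> q \<in> H \<Longrightarrow> p \<in> ?l \<Longrightarrow> q \<in> ?l \<Longrightarrow> p \<noteq> q \<Longrightarrow> ?l \<subseteq> H" for p q
    using hyperplane_contains_line[OF hp l] by blast
  have "?l \<inter> H \<noteq> {}" using hp l unfolding hyperplane_def by blast
  then show ?thesis
    using closed[of "{z, x}" "{z, y}"] closed[of "{z, x}" "{x, y}"] closed[of "{z, y}" "{x, y}"]
      distinct by blast
qed

theorem lemma3p4:
  fixes X :: "'a set" and z :: 'a and L :: "'a set set set" and H :: "'a set set"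
    and n :: nat and A B :: "'a set"
  assumes "finite X" and "card X = n" and "z \<notin> X"
    and "configuration (n choose 2) (n - 2) (n choose 3) 3 (P2 X) L"
    and "hyperplane (P2 (X \<union> {z})) (ext_lines z X L) H"
    and "A \<in> {{y \<in> X. x = y \<or> (x \<noteq> y \<and> {x, y} \<in> H)} | x. x \<in> X}"
    and "B \<in> {{y \<in> X. x = y \<or> (x \<noteq> y \<and> {x, y} \<in> H)} | x. x \<in> X}"
    and "A \<noteq> B"
  shows "(\<forall>x\<in>A. {z, x} \<in> H) \<or> (\<forall>x\<in>B. {z, x} \<in> H)"
proof -
  define side where "side x \<longleftrightarrow> {z, x} \<in> H" for x
  have fibre: "{y \<in> X. x = y \<or> (x \<noteq> y \<and> {x, y} \<in> H)} = {y \<in> X. side y = side x}"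
    if "x \<in> X" for x
    using hyperplane_edge_iff[OF assms(5,3) that] unfolding side_def by blast
  obtain a b where "a \<in> X" "b \<in> X"
    and A: "A = {y \<in> X. side y = side a}" and B: "B = {y \<in> X. side y = side b}"
    using assms(6,7) fibre by blast
  with \<open>A \<noteq> B\<close> have "side a \<or> side b" by auto
  with A B show ?thesis unfolding side_def by auto
qed

end
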